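(* Let $(X,\mathcal B)$ be any $(K_4-e)$-design of order $11$, and let $D=\{\{x,y\}:\ [x,y,z-u]\in\mathcal B\}$. Then the graph $(X,D)$ is a cycle of length $11$.
   Context: $K_4-e$ is the graph on four vertices $a,b,c,d$ with edges $ab,ac,ad,bc,bd$; it is denoted $[a,b,c-d]$ (so in $[x,y,z-u]$ the vertices $x,y$ have degree $3$, $z,u$ have degree $2$, and $zu$ is the missing edge). A $(K_4-e)$-design of order $v$ is a pair $(X,\mathcal B)$ where $X$ is a set of $v$ vertices and $\mathcal B$ is a collection of copies of $K_4-e$ (called blocks) with vertices in $X$ whose edge sets partition the edge set of the complete graph $K_v$ on $X$. *)

theory Defs
  imports Main
begin

text \<open>A block [a,b,c-d] of a (K4-e)-design is represented by the tuple (a,b,c,d):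
  a,b are the degree-3 vertices, c,d the degree-2 vertices, cd the missing edge.\<close>

type_synonym 'a block = "'a \<times> 'a \<times> 'a \<times> 'a"

definition block_edges :: "'a block \<Rightarrow> 'a set set" where
  "block_edges = (\<lambda>(a,b,c,d). {{a,b},{a,c},{a,d},{b,c},{b,d}})"

definition block_verts :: "'a block \<Rightarrow> 'a list" where
  "block_verts = (\<lambda>(a,b,c,d). [a,b,c,d])"

definition K4e_design :: "'a set \<Rightarrow> 'a block set \<Rightarrow> nat \<Rightarrow> bool" where
  "K4e_design X B v \<longleftrightarrow>
     finite X \<and> card X = v \<and>
     (\<forall>\<beta>\<in>B. distinct (block_verts \<beta>) \<and> set (block_verts \<beta>) \<subseteq> X) \<and>
     (\<forall>x\<in>X. \<forall>y\<in>X. x \<noteq> y \<longrightarrow> (\<exists>!\<beta>. \<beta> \<in> B \<and> {x,y} \<in> block_edges \<beta>))"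

definition spine_edges :: "'a block set \<Rightarrow> 'a set set" where
  "spine_edges B = {{x,y} | x y z u. (x,y,z,u) \<in> B}"

definition is_cycle :: "'a set \<Rightarrow> 'a set set \<Rightarrow> nat \<Rightarrow> bool" where
  "is_cycle X D n \<longleftrightarrow> 3 \<le> n \<and>
     (\<exists>f. bij_betw f {0..<n} X \<and> D = {{f i, f ((i + 1) mod n)} | i. i < n})"

end

theory Submission
  imports Defs
begin

text \<open>Counting the ten edges at a vertex gives \<open>3s + 2l = 10\<close>, where \<open>s\<close> and \<open>l\<close> are the numbers
  of blocks in which the vertex has degree 3 and 2. Hence there are eleven blocks, with 22
  incidences of each kind, so \<open>s = l = 2\<close> at every vertex: \<open>D\<close> is 2-regular, and it remains to
  show that it is connected. For a union \<open>C\<close> of components of \<open>D\<close>, every \<open>x \<in> C\<close> sees each other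
  vertex of \<open>C\<close> as one of its two \<open>D\<close>-neighbours, as a degree-2 vertex of a block in which \<open>x\<close> has
  degree 3, or the other way round, and the vertices of the last kind come in \<open>D\<close>-edges. Double
  counting shows that 4 divides \<open>|C| (|C| - 3)\<close> and \<open>|C| \<noteq> 4\<close>, so a disconnected \<open>D\<close> would be a
  triangle and an 8-cycle. A \<open>D\<close>-triangle, finally, forces the blocks on the remaining eight
  vertices one after the other until no consistent choice is left.\<close>

lemma sum_card_swap:
  assumes "finite A" "finite B"
  shows "(\<Sum>x\<in>A. card {y\<in>B. R x y}) = (\<Sum>y\<in>B. card {x\<in>A. R x y})"
  using sum.swap_restrict[OF assms, of "\<lambda>x y. (1::nat)" R] by simp

lemma sum_card_incident:
  assumes "finite A" "finite B" "\<And>\<beta>. \<beta> \<in> B \<Longrightarrow> F \<beta> \<subseteq> A \<and> card (F \<beta>) = k"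
  shows "(\<Sum>x\<in>A. card {\<beta>\<in>B. x \<in> F \<beta>}) = k * card B"
proof -
  have "(\<Sum>x\<in>A. card {\<beta>\<in>B. x \<in> F \<beta>}) = (\<Sum>\<beta>\<in>B. card {x\<in>A. x \<in> F \<beta>})"
    by (rule sum_card_swap[OF assms(1,2)])
  also have "\<dots> = (\<Sum>\<beta>\<in>B. k)"
  proof (rule sum.cong[OF refl])
    fix \<beta> assume "\<beta> \<in> B"
    with assms(3) have "{x\<in>A. x \<in> F \<beta>} = F \<beta>" "card (F \<beta>) = k" by auto
    then show "card {x\<in>A. x \<in> F \<beta>} = k" by simp
  qed
  finally show ?thesis by simp
qed

section \<open>Two-regular graphs\<close>

locale two_regular_graph =
  fixes V :: "'a set" and E :: "'a \<Rightarrow> 'a \<Rightarrow> bool"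
  assumes finite_V: "finite V"
    and E_sym: "E x y \<Longrightarrow> E y x"
    and E_in_V: "E x y \<Longrightarrow> x \<in> V \<and> y \<in> V \<and> x \<noteq> y"
    and two_neighbours:
      "x \<in> V \<Longrightarrow> \<exists>y1 y2. y1 \<noteq> y2 \<and> E x y1 \<and> E x y2 \<and> (\<forall>y. E x y \<longrightarrow> y = y1 \<or> y = y2)"
begin

lemma neighbour_cases: "E x p \<Longrightarrow> E x q \<Longrightarrow> p \<noteq> q \<Longrightarrow> E x y \<Longrightarrow> y = p \<or> y = q"
  using two_neighbours E_in_V by metis

lemma other_neighbour_exists: "E x p \<Longrightarrow> \<exists>y. E x y \<and> y \<noteq> p"
  using two_neighbours E_in_V by metis

definition non_backtracking :: "(nat \<Rightarrow> 'a) \<Rightarrow> bool" where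
  "non_backtracking f \<longleftrightarrow> (\<forall>n. E (f n) (f (Suc n)) \<and> f (Suc (Suc n)) \<noteq> f n)"

lemma non_backtracking_walk_exists:
  assumes "E x0 x1"
  shows "\<exists>f. non_backtracking f"
proof -
  define step where "step = (\<lambda>(p, c). (c, SOME y. E c y \<and> y \<noteq> p))"
  define f where "f n = fst ((step ^^ n) (x0, x1))" for n
  have f_Suc: "f (Suc n) = snd ((step ^^ n) (x0, x1))" for n
    by (simp add: f_def step_def split_beta)
  have f_Suc_Suc: "f (Suc (Suc n)) = (SOME y. E (f (Suc n)) y \<and> y \<noteq> f n)" for n
    by (simp add: f_def f_Suc step_def split_beta)
  have adj: "E (f n) (f (Suc n))" for n
  proof (induction n)
    case 0
    then show ?case using assms f_Suc[of 0] by (simp add: f_def)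
  next
    case (Suc n)
    then show ?case
      unfolding f_Suc_Suc using someI_ex[OF other_neighbour_exists[OF E_sym]] by blast
  qed
  have "f (Suc (Suc n)) \<noteq> f n" for n
    unfolding f_Suc_Suc using someI_ex[OF other_neighbour_exists[OF E_sym[OF adj]]] by blast
  with adj show ?thesis unfolding non_backtracking_def by blast
qed

lemma non_backtracking_next:
  assumes "non_backtracking f" "E (f (Suc n)) y" "y \<noteq> f n"
  shows "y = f (Suc (Suc n))"
  using neighbour_cases[OF E_sym[of "f n"] _ _ assms(2)] assms unfolding non_backtracking_def
  by metis

lemma non_backtracking_closes:
  assumes nb: "non_backtracking f"
  obtains n where "3 \<le> n" "inj_on f {..<n}" "f n = f 0"
proof -
  have adj: "E (f k) (f (Suc k))" for k
    using nb by (auto simp: non_backtracking_def)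
  have turn: "f (Suc (Suc k)) \<noteq> f k" for k
    using nb by (auto simp: non_backtracking_def)
  define P where "P m \<longleftrightarrow> f m \<in> f ` {..<m}" for m
  have "\<not> inj_on f {..card V}"
  proof
    assume "inj_on f {..card V}"
    then have "card (f ` {..card V}) = Suc (card V)" by (simp add: card_image)
    moreover have "f ` {..card V} \<subseteq> V" using adj E_in_V by blast
    then have "card (f ` {..card V}) \<le> card V" by (rule card_mono[OF finite_V])
    ultimately show False by simp
  qed
  then obtain i j where "f i = f j" "i \<noteq> j"
    unfolding inj_on_def by blast
  then have "P (max i j)"
    by (cases "i < j") (auto simp: P_def max_def intro: rev_image_eqI)
  define n where "n = (LEAST m. P m)"
  have "P n" unfolding n_def by (rule LeastI) fact
  then obtain j where j: "j < n" "f n = f j" by (auto simp: P_def)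
  have inj: "inj_on f {..<n}"
  proof (rule inj_onI, rule ccontr)
    fix a b assume ab: "a \<in> {..<n}" "b \<in> {..<n}" "f a = f b" "a \<noteq> b"
    have "P (max a b)"
      using ab by (cases "a < b") (auto simp: P_def max_def intro: rev_image_eqI)
    then have "n \<le> max a b" unfolding n_def by (rule Least_le)
    then show False using ab by auto
  qed
  have "n \<noteq> Suc j" using adj[of j] j E_in_V by metis
  moreover have "n \<noteq> Suc (Suc j)" using turn[of j] j by auto
  ultimately obtain m where m: "n = Suc m" "Suc j < m" using j by (cases n) auto
  have "j = 0"
  proof (rule ccontr)
    assume "j \<noteq> 0"
    then obtain i where i: "j = Suc i" by (cases j) auto
    have "E (f j) (f i)" "E (f j) (f m)" "f i \<noteq> f (Suc j)"
      using E_sym[OF adj[of i]] E_sym[OF adj[of m]] turn[of i] i m j by auto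
    then have "f m = f i \<or> f m = f (Suc j)"
      using neighbour_cases adj[of j] by blast
    moreover have "m < n" "i < n" "Suc j < n" using m i j by auto
    ultimately have "m = i \<or> m = Suc j" using inj_onD[OF inj] by blast
    then show False using m i by simp
  qed
  show ?thesis by (rule that[of n]) (use j m inj \<open>j = 0\<close> in auto)
qed

lemma closed_walk_periodic:
  assumes nb: "non_backtracking f" and n: "3 \<le> n" "inj_on f {..<n}" "f n = f 0"
  shows "f (k mod n) = f k"
proof -
  have adj: "E (f k) (f (Suc k))" for k
    using nb by (simp add: non_backtracking_def)
  define m where "m = n - 2"
  have m: "n = Suc (Suc m)" using n(1) by (simp add: m_def)
  have "f (Suc 0) \<noteq> f (Suc m)"
    using inj_onD[OF n(2), of "Suc 0" "Suc m"] n(1) m by auto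
  then have "f (Suc n) = f (Suc 0)"
    using non_backtracking_next[OF nb, of "Suc m" "f (Suc 0)"] adj[of 0] n(3) m by simp
  then have shift: "f (k + n) = f k \<and> f (Suc k + n) = f (Suc k)" for k
  proof (induction k)
    case (Suc k)
    then show ?case
      using non_backtracking_next[OF nb, of "k + n" "f (Suc (Suc k))"] nb n(3)
      by (simp add: non_backtracking_def)
  qed (use n(3) in simp)
  have "f (r + q * n) = f r" for r q
  proof (induction q)
    case (Suc q)
    then show ?case using shift[of "r + q * n"] by (simp add: ac_simps)
  qed simp
  from this[of "k mod n" "k div n"] show ?thesis
    by (simp only: mod_div_mult_eq)
qed

lemma closed_walk_neighbours:
  assumes nb: "non_backtracking f" and n: "3 \<le> n" "inj_on f {..<n}" "f n = f 0"
  shows "E (f k) y \<longleftrightarrow> y = f (Suc k) \<or> y = f (k + n - 1)"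
proof -
  have adj: "E (f k) (f (Suc k))" and turn: "f (Suc (Suc k)) \<noteq> f k" for k
    using nb by (simp_all add: non_backtracking_def)
  have shift: "f (k + n) = f k" for k
    using closed_walk_periodic[OF assms, of "k + n"] closed_walk_periodic[OF assms, of k] by simp
  have "Suc (k + n - 1) = k + n" "Suc (Suc (k + n - 1)) = Suc k + n" using n(1) by simp_all
  then have "E (f k) (f (k + n - 1))" "f (Suc k) \<noteq> f (k + n - 1)"
    using E_sym[OF adj[of "k + n - 1"]] turn[of "k + n - 1"] shift[of k] shift[of "Suc k"]
    by simp_all
  then show ?thesis using neighbour_cases[OF adj[of k]] adj[of k] by blast
qed

theorem is_cycle_if_connected:
  assumes connected: "\<And>C. C \<subseteq> V \<Longrightarrow> C \<noteq> {} \<Longrightarrow> \<forall>x\<in>C. \<forall>y. E x y \<longrightarrow> y \<in> C \<Longrightarrow> C = V"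
    and "V \<noteq> {}"
  shows "is_cycle V {{x, y} | x y. E x y} (card V)"
proof -
  obtain x0 x1 where "E x0 x1" using \<open>V \<noteq> {}\<close> two_neighbours by blast
  then obtain f where nb: "non_backtracking f" using non_backtracking_walk_exists by blast
  then obtain n where n: "3 \<le> n" "inj_on f {..<n}" "f n = f 0" by (rule non_backtracking_closes)
  note periodic = closed_walk_periodic[OF nb n] and nbrs = closed_walk_neighbours[OF nb n]
  have image: "f ` {..<n} = range f"
    using periodic n(1) by (auto intro!: image_eqI[of _ f "_ mod n"])
  have "f ` {..<n} = V"
  proof (rule connected)
    show "f ` {..<n} \<subseteq> V" using nbrs E_in_V by blast
    show "\<forall>x\<in>f ` {..<n}. \<forall>y. E x y \<longrightarrow> y \<in> f ` {..<n}"
      unfolding image using nbrs by blast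
  qed (use n(1) in \<open>auto simp: lessThan_empty_iff\<close>)
  then have bij: "bij_betw f {0..<n} V" and card: "card V = n"
    using n(2) by (auto simp: bij_betw_def card_image atLeast0LessThan)
  have "{{x, y} | x y. E x y} = {{f i, f ((i + 1) mod n)} | i. i < n}"
  proof (intro equalityI subsetI)
    fix e assume "e \<in> {{x, y} | x y. E x y}"
    then obtain i y where e: "e = {f i, y}" "E (f i) y" "i < n"
      using \<open>f ` {..<n} = V\<close> E_in_V by blast
    show "e \<in> {{f i, f ((i + 1) mod n)} | i. i < n}"
    proof (cases "y = f (Suc i)")
      case True
      then show ?thesis using e periodic[of "Suc i"] by auto
    next
      case False
      define j where "j = (i + n - 1) mod n"
      have "(j + 1) mod n = i" using e(3) n(1) by (simp add: j_def mod_Suc_eq)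
      moreover have "y = f j" using nbrs e(2) False periodic by (simp add: j_def)
      ultimately have "e = {f j, f ((j + 1) mod n)}" using e by (simp add: insert_commute)
      moreover have "j < n" using n(1) by (simp add: j_def)
      ultimately show ?thesis by blast
    qed
  next
    fix e assume "e \<in> {{f i, f ((i + 1) mod n)} | i. i < n}"
    then obtain i where "e = {f i, f ((i + 1) mod n)}" by blast
    then have "e = {f i, f (Suc i)}" using periodic[of "Suc i"] by simp
    then show "e \<in> {{x, y} | x y. E x y}" using nbrs by blast
  qed
  with bij card n(1) show ?thesis by (auto simp: is_cycle_def)
qed

end

section \<open>Spines and wings of a \<open>(K\<^sub>4-e)\<close>-design\<close>

definition spine_of :: "'a block \<Rightarrow> 'a set" where
  "spine_of = (\<lambda>(a, b, c, d). {a, b})"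

definition wings_of :: "'a block \<Rightarrow> 'a set" where
  "wings_of = (\<lambda>(a, b, c, d). {c, d})"

lemma spine_of_in_block_edges: "spine_of \<beta> \<in> block_edges \<beta>"
  by (cases \<beta>) (simp add: block_edges_def spine_of_def)

lemma block_edges_eq:
  "{a, b} = {x, y} \<Longrightarrow> {c, d} = {z, u} \<Longrightarrow>
    block_edges (a, b, c, d) = {{x, y}, {x, z}, {x, u}, {y, z}, {y, u}}"
  by (auto simp: block_edges_def doubleton_eq_iff insert_commute)

locale K4e_design_order =
  fixes X :: "'a set" and B :: "'a block set" and v :: nat
  assumes design: "K4e_design X B v"
begin

lemma finite_X: "finite X" and card_X: "card X = v"
  using design by (auto simp: K4e_design_def)

lemma block_vertices:
  "(a, b, c, d) \<in> B \<Longrightarrow> a \<in> X \<and> b \<in> X \<and> c \<in> X \<and> d \<in> X \<and>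
    a \<noteq> b \<and> a \<noteq> c \<and> a \<noteq> d \<and> b \<noteq> c \<and> b \<noteq> d \<and> c \<noteq> d"
  using design by (fastforce simp: K4e_design_def block_verts_def)

lemma finite_B: "finite B"
proof (rule finite_subset)
  show "B \<subseteq> X \<times> X \<times> X \<times> X" using block_vertices by auto
qed (simp add: finite_X)

lemma edge_in_unique_block:
  "x \<in> X \<Longrightarrow> y \<in> X \<Longrightarrow> x \<noteq> y \<Longrightarrow> \<exists>!\<beta>. \<beta> \<in> B \<and> {x, y} \<in> block_edges \<beta>"
  using design by (auto simp: K4e_design_def)

lemma block_eq_if_common_edge:
  assumes "\<beta> \<in> B" "\<beta>' \<in> B" "{p, q} \<in> block_edges \<beta>" "{p, q} \<in> block_edges \<beta>'" "p \<noteq> q"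
  shows "\<beta> = \<beta>'"
proof -
  obtain a b c d where "\<beta> = (a, b, c, d)" by (cases \<beta>) auto
  with assms(1,3) have "p \<in> X \<and> q \<in> X"
    using block_vertices by (auto simp: block_edges_def doubleton_eq_iff)
  with assms show ?thesis using edge_in_unique_block by blast
qed

text \<open>\<open>is_block x y z u\<close>: \<open>B\<close> contains \<open>[x,y,z-u]\<close> up to the symmetries of \<open>K\<^sub>4-e\<close>.
  Then \<open>spine\<close> is the graph \<open>D\<close>, and \<open>wing x w\<close> says that \<open>w\<close> has degree 2 in a block in
  which \<open>x\<close> has degree 3.\<close>

definition is_block :: "'a \<Rightarrow> 'a \<Rightarrow> 'a \<Rightarrow> 'a \<Rightarrow> bool" where
  "is_block x y z u \<longleftrightarrow> (\<exists>\<beta>\<in>B. spine_of \<beta> = {x, y} \<and> wings_of \<beta> = {z, u})"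

definition spine :: "'a \<Rightarrow> 'a \<Rightarrow> bool" where
  "spine x y \<longleftrightarrow> (\<exists>z u. is_block x y z u)"

definition wing :: "'a \<Rightarrow> 'a \<Rightarrow> bool" where
  "wing x w \<longleftrightarrow> (\<exists>y u. is_block x y w u)"

lemma is_block_iff_block:
  "is_block x y z u \<longleftrightarrow> (\<exists>a b c d. (a, b, c, d) \<in> B \<and> {a, b} = {x, y} \<and> {c, d} = {z, u})"
proof
  assume "is_block x y z u"
  then obtain \<beta> where "\<beta> \<in> B" "spine_of \<beta> = {x, y}" "wings_of \<beta> = {z, u}"
    by (auto simp: is_block_def)
  then show "\<exists>a b c d. (a, b, c, d) \<in> B \<and> {a, b} = {x, y} \<and> {c, d} = {z, u}"
    by (cases \<beta>) (auto simp: spine_of_def wings_of_def)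
next
  assume "\<exists>a b c d. (a, b, c, d) \<in> B \<and> {a, b} = {x, y} \<and> {c, d} = {z, u}"
  then obtain a b c d where "(a, b, c, d) \<in> B" "{a, b} = {x, y}" "{c, d} = {z, u}" by blast
  then show "is_block x y z u"
    unfolding is_block_def
    by (intro bexI[of _ "(a, b, c, d)"]) (simp_all add: spine_of_def wings_of_def)
qed

lemma block_is_block: "(a, b, c, d) \<in> B \<Longrightarrow> is_block a b c d"
  by (auto simp: is_block_iff_block)

lemma is_block_swap_spine: "is_block x y z u \<Longrightarrow> is_block y x z u"
  and is_block_swap_wings: "is_block x y z u \<Longrightarrow> is_block x y u z"
  by (simp_all add: is_block_def insert_commute)

lemma is_block_distinct:
  assumes "is_block x y z u"
  shows "x \<in> X \<and> y \<in> X \<and> z \<in> X \<and> u \<in> X \<and>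
    x \<noteq> y \<and> x \<noteq> z \<and> x \<noteq> u \<and> y \<noteq> z \<and> y \<noteq> u \<and> z \<noteq> u"
proof -
  obtain a b c d where "(a, b, c, d) \<in> B" "{a, b} = {x, y}" "{c, d} = {z, u}"
    using assms by (auto simp: is_block_iff_block)
  then show ?thesis using block_vertices[of a b c d] by (auto simp: doubleton_eq_iff)
qed

lemma is_block_edge_unique:
  assumes "is_block x y z u" "is_block x' y' z' u'" "p \<noteq> q"
    and "{p, q} \<in> {{x, y}, {x, z}, {x, u}, {y, z}, {y, u}}"
    and "{p, q} \<in> {{x', y'}, {x', z'}, {x', u'}, {y', z'}, {y', u'}}"
  shows "{x, y} = {x', y'} \<and> {z, u} = {z', u'}"
proof -
  obtain a b c d where \<beta>: "(a, b, c, d) \<in> B" "{a, b} = {x, y}" "{c, d} = {z, u}"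
    using assms(1) by (auto simp: is_block_iff_block)
  obtain a' b' c' d' where \<beta>': "(a', b', c', d') \<in> B" "{a', b'} = {x', y'}" "{c', d'} = {z', u'}"
    using assms(2) by (auto simp: is_block_iff_block)
  have "(a, b, c, d) = (a', b', c', d')"
    using block_eq_if_common_edge[OF \<beta>(1) \<beta>'(1) _ _ assms(3)] assms(4,5)
    by (simp add: block_edges_eq[OF \<beta>(2,3)] block_edges_eq[OF \<beta>'(2,3)])
  with \<beta> \<beta>' show ?thesis by simp
qed

lemma is_block_wings_unique: "is_block x y z u \<Longrightarrow> is_block x y z' u' \<Longrightarrow> {z, u} = {z', u'}"
  using is_block_edge_unique[of x y z u x y z' u' x y] is_block_distinct by blast

lemma is_block_determined: "is_block x y z u \<Longrightarrow> is_block x y' z u' \<Longrightarrow> y = y' \<and> u = u'"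
  using is_block_edge_unique[of x y z u x y' z u' x z] is_block_distinct
  by (auto simp: doubleton_eq_iff)

lemma spine_sym: "spine x y \<Longrightarrow> spine y x"
  by (auto simp: spine_def dest: is_block_swap_spine)

lemma spine_distinct: "spine x y \<Longrightarrow> x \<in> X \<and> y \<in> X \<and> x \<noteq> y"
  by (auto simp: spine_def dest: is_block_distinct)

lemma is_block_spine: "is_block x y z u \<Longrightarrow> spine x y"
  by (auto simp: spine_def)

lemma is_block_wing: "is_block x y z u \<Longrightarrow> wing x z \<and> wing x u \<and> wing y z \<and> wing y u"
  unfolding wing_def using is_block_swap_spine is_block_swap_wings by blast

lemma wing_not_spine: "wing x w \<Longrightarrow> \<not> spine x w"
proof
  assume "wing x w" "spine x w"
  then obtain y u z' u' where "is_block x y w u" "is_block x w z' u'"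
    by (auto simp: wing_def spine_def)
  with is_block_edge_unique[of x y w u x w z' u' x w] is_block_distinct show False
    by (auto simp: doubleton_eq_iff)
qed

lemma wing_asym: "wing x w \<Longrightarrow> \<not> wing w x"
proof
  assume "wing x w" "wing w x"
  then obtain y u y' u' where "is_block x y w u" "is_block w y' x u'"
    by (auto simp: wing_def)
  with is_block_edge_unique[of x y w u w y' x u' x w] is_block_distinct show False
    by (auto simp: doubleton_eq_iff)
qed

text \<open>The block containing the edge \<open>{x, w}\<close> decides which of the three relations holds.\<close>

lemma spine_or_wing: "x \<in> X \<Longrightarrow> w \<in> X \<Longrightarrow> x \<noteq> w \<Longrightarrow> spine x w \<or> wing x w \<or> wing w x"
proof -
  assume "x \<in> X" "w \<in> X" "x \<noteq> w"
  then obtain a b c d where "(a, b, c, d) \<in> B" "{x, w} \<in> block_edges (a, b, c, d)"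
    using edge_in_unique_block by (metis prod_cases4)
  moreover have "spine a b" "spine b a" "wing a c" "wing a d" "wing b c" "wing b d"
    using block_is_block[OF calculation(1)] is_block_wing is_block_spine spine_sym by blast+
  ultimately show ?thesis
    by (auto simp: block_edges_def doubleton_eq_iff)
qed

lemma is_block_wing_not_spine: "is_block x y z u \<Longrightarrow> \<not> spine x z"
  using is_block_wing wing_not_spine by blast

lemma wing_if_not_spine_not_wing:
  "p \<in> X \<Longrightarrow> x \<in> X \<Longrightarrow> p \<noteq> x \<Longrightarrow> \<not> spine x p \<Longrightarrow> \<not> wing x p \<Longrightarrow> wing p x"
  using spine_or_wing by blast

lemma is_block_three_wings:
  assumes "is_block x y z u" "is_block x y z' u'" "is_block x y z'' u''"
    and "z \<noteq> z'" "z \<noteq> z''" "z' \<noteq> z''"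
  shows False
proof -
  have "{z, u} = {z', u'}" "{z, u} = {z'', u''}"
    using is_block_wings_unique assms(1-3) by blast+
  then show False using assms(4-6) by (auto simp: doubleton_eq_iff)
qed

lemma is_block_wings_disjoint:
  "is_block x y z u \<Longrightarrow> is_block x y' z' u' \<Longrightarrow> y \<noteq> y' \<Longrightarrow> {z, u} \<inter> {z', u'} = {}"
  using is_block_determined is_block_swap_wings by blast

lemma is_block_wings_perm:
  "is_block x y z u \<Longrightarrow> p \<in> {z, u} \<Longrightarrow> q \<in> {z, u} \<Longrightarrow> p \<noteq> q \<Longrightarrow> is_block x y p q"
  using is_block_swap_wings by auto

definition spine_blocks :: "'a \<Rightarrow> 'a block set" where
  "spine_blocks x = {\<beta>\<in>B. x \<in> spine_of \<beta>}"

definition wing_blocks :: "'a \<Rightarrow> 'a block set" where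
  "wing_blocks x = {\<beta>\<in>B. x \<in> wings_of \<beta>}"

lemma card_neighbours_in_block:
  assumes "\<beta> \<in> B"
  shows "card {w\<in>X - {x}. {x, w} \<in> block_edges \<beta>} =
    3 * of_bool (x \<in> spine_of \<beta>) + 2 * of_bool (x \<in> wings_of \<beta>)"
proof -
  obtain a b c d where \<beta>: "\<beta> = (a, b, c, d)" by (cases \<beta>) auto
  then have d: "a \<in> X" "b \<in> X" "c \<in> X" "d \<in> X" "distinct [a, b, c, d]"
    using block_vertices assms by auto
  have "{w\<in>X - {x}. {x, w} \<in> block_edges \<beta>} =
     (if x = a then {b, c, d} else if x = b then {a, c, d} else if x \<in> {c, d} then {a, b} else {})"
    using d by (auto simp: \<beta> block_edges_def doubleton_eq_iff)
  then show ?thesis using d by (auto simp: \<beta> spine_of_def wings_of_def)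
qed

lemma degree_equation:
  assumes "x \<in> X"
  shows "3 * card (spine_blocks x) + 2 * card (wing_blocks x) = v - 1"
proof -
  have "v - 1 = (\<Sum>w\<in>X - {x}. card {\<beta>\<in>B. {x, w} \<in> block_edges \<beta>})"
  proof -
    have "card {\<beta>\<in>B. {x, w} \<in> block_edges \<beta>} = 1" if w: "w \<in> X - {x}" for w
    proof -
      obtain \<beta> where "\<beta> \<in> B \<and> {x, w} \<in> block_edges \<beta>"
        "\<forall>\<gamma>. \<gamma> \<in> B \<and> {x, w} \<in> block_edges \<gamma> \<longrightarrow> \<gamma> = \<beta>"
        using edge_in_unique_block[of x w] assms w by blast
      then have "{\<beta>\<in>B. {x, w} \<in> block_edges \<beta>} = {\<beta>}" by blast
      then show ?thesis by simp
    qed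
    then show ?thesis using assms finite_X card_X by simp
  qed
  also have "\<dots> = (\<Sum>\<beta>\<in>B. card {w\<in>X - {x}. {x, w} \<in> block_edges \<beta>})"
    using finite_X finite_B by (intro sum_card_swap) auto
  also have "\<dots> = (\<Sum>\<beta>\<in>B. 3 * of_bool (x \<in> spine_of \<beta>) + 2 * of_bool (x \<in> wings_of \<beta>))"
    using card_neighbours_in_block by simp
  also have "\<dots> = 3 * card (spine_blocks x) + 2 * card (wing_blocks x)"
    using finite_B
    by (simp add: sum.distrib sum_distrib_left[symmetric] spine_blocks_def wing_blocks_def Int_def)
  finally show ?thesis by simp
qed

lemma sum_card_spine_blocks: "(\<Sum>x\<in>X. card (spine_blocks x)) = 2 * card B"
  unfolding spine_blocks_def
  using block_vertices by (intro sum_card_incident[OF finite_X finite_B]) (auto simp: spine_of_def)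

lemma sum_card_wing_blocks: "(\<Sum>x\<in>X. card (wing_blocks x)) = 2 * card B"
  unfolding wing_blocks_def
  using block_vertices by (intro sum_card_incident[OF finite_X finite_B]) (auto simp: wings_of_def)

end

section \<open>Designs of order 11\<close>

locale K4e_design_11 = K4e_design_order X B 11 for X :: "'a set" and B :: "'a block set"
begin

lemma card_B: "card B = 11"
proof -
  have "(\<Sum>x\<in>X. 3 * card (spine_blocks x) + 2 * card (wing_blocks x)) = (\<Sum>x\<in>X. 10)"
    using degree_equation by simp
  then have "3 * (2 * card B) + 2 * (2 * card B) = 110"
    by (simp add: sum.distrib sum_distrib_left[symmetric] sum_card_spine_blocks
        sum_card_wing_blocks card_X)
  then show ?thesis by simp
qed

lemma card_spine_blocks: "x \<in> X \<Longrightarrow> card (spine_blocks x) = 2"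
proof (rule ccontr)
  assume x: "x \<in> X" and "card (spine_blocks x) \<noteq> 2"
  have le: "card (spine_blocks y) \<le> 2" if "y \<in> X" for y
    using degree_equation[OF that] by presburger
  with x \<open>card (spine_blocks x) \<noteq> 2\<close> have "card (spine_blocks x) < 2"
    by fastforce
  then have "(\<Sum>y\<in>X. card (spine_blocks y)) < (\<Sum>y\<in>X. 2)"
    using le x by (intro sum_strict_mono_ex1[OF finite_X]) auto
  then show False using sum_card_spine_blocks card_B card_X by simp
qed

lemma card_wing_blocks: "x \<in> X \<Longrightarrow> card (wing_blocks x) = 2"
  using degree_equation[of x] card_spine_blocks[of x] by simp

lemma spine_two_neighbours:
  assumes "x \<in> X"
  shows "\<exists>y1 y2. y1 \<noteq> y2 \<and> spine x y1 \<and> spine x y2 \<and> (\<forall>y. spine x y \<longrightarrow> y = y1 \<or> y = y2)"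
proof -
  obtain \<beta>1 \<beta>2 where \<beta>: "spine_blocks x = {\<beta>1, \<beta>2}" "\<beta>1 \<noteq> \<beta>2"
    using card_spine_blocks[OF assms] by (auto simp: card_2_iff)
  have spine_block: "\<exists>y. spine_of \<beta> = {x, y} \<and> spine x y" if \<beta>_in: "\<beta> \<in> spine_blocks x" for \<beta>
  proof -
    obtain a b c d where \<beta>: "\<beta> = (a, b, c, d)" "(a, b, c, d) \<in> B" "x = a \<or> x = b"
      using \<beta>_in by (cases \<beta>) (auto simp: spine_blocks_def spine_of_def)
    then have "spine a b" "spine b a" using block_is_block is_block_spine spine_sym by blast+
    with \<beta> show ?thesis by (auto simp: spine_of_def insert_commute)
  qed
  obtain y1 where 1: "spine_of \<beta>1 = {x, y1}" "spine x y1" using spine_block[of \<beta>1] \<beta> by auto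
  obtain y2 where 2: "spine_of \<beta>2 = {x, y2}" "spine x y2" using spine_block[of \<beta>2] \<beta> by auto
  have in_B: "\<beta>1 \<in> B" "\<beta>2 \<in> B" using \<beta>(1) unfolding spine_blocks_def by blast+
  have "y1 \<noteq> y2"
  proof
    assume "y1 = y2"
    then have "{x, y1} \<in> block_edges \<beta>1" "{x, y1} \<in> block_edges \<beta>2"
      using spine_of_in_block_edges 1(1) 2(1) by metis+
    with block_eq_if_common_edge[OF in_B] spine_distinct[OF 1(2)] \<beta>(2) show False by blast
  qed
  moreover have "y = y1 \<or> y = y2" if "spine x y" for y
  proof -
    obtain \<beta> where "\<beta> \<in> B" "spine_of \<beta> = {x, y}"
      using \<open>spine x y\<close> by (auto simp: spine_def is_block_def)
    then have "\<beta> = \<beta>1 \<or> \<beta> = \<beta>2" using \<beta>(1) by (auto simp: spine_blocks_def)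
    with \<open>spine_of \<beta> = {x, y}\<close> 1(1) 2(1) spine_distinct[OF \<open>spine x y\<close>] show ?thesis
      by (auto simp: doubleton_eq_iff)
  qed
  ultimately show ?thesis using 1(2) 2(2) by blast
qed

sublocale spine_graph: two_regular_graph X spine
  using finite_X spine_sym spine_distinct spine_two_neighbours by unfold_locales

lemma wing_in_blocks:
  assumes "wing x w" "y1 \<noteq> y2" "is_block x y1 z1 u1" "is_block x y2 z2 u2"
  shows "w \<in> {z1, u1, z2, u2}"
proof -
  obtain y u where b: "is_block x y w u" using assms(1) by (auto simp: wing_def)
  have "y = y1 \<or> y = y2"
    using spine_graph.neighbour_cases[OF is_block_spine[OF assms(3)] is_block_spine[OF assms(4)]
        assms(2) is_block_spine[OF b]] .
  then have "{w, u} = {z1, u1} \<or> {w, u} = {z2, u2}"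
    using is_block_wings_unique[OF b] assms(3,4) by blast
  then show ?thesis by (auto simp: doubleton_eq_iff)
qed

lemma block_edges_spine_wing:
  "p \<in> spine_of \<beta> \<Longrightarrow> w \<in> wings_of \<beta> \<Longrightarrow> {p, w} \<in> block_edges \<beta>"
  by (cases \<beta>) (auto simp: block_edges_def spine_of_def wings_of_def)

lemma wing_parents:
  assumes "x \<in> X"
  obtains p1 q1 t1 p2 q2 t2 where "is_block p1 q1 x t1" "is_block p2 q2 x t2"
    "{p1, q1} \<inter> {p2, q2} = {}" "\<And>p. wing p x \<Longrightarrow> p \<in> {p1, q1, p2, q2}"
proof -
  obtain \<gamma>1 \<gamma>2 where \<gamma>: "wing_blocks x = {\<gamma>1, \<gamma>2}" "\<gamma>1 \<noteq> \<gamma>2"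
    using card_wing_blocks[OF assms] by (auto simp: card_2_iff)
  have wing_block: "\<exists>p q t. spine_of \<gamma> = {p, q} \<and> is_block p q x t"
    if \<gamma>_in: "\<gamma> \<in> wing_blocks x" for \<gamma>
  proof -
    obtain a b c d where \<gamma>: "\<gamma> = (a, b, c, d)" "(a, b, c, d) \<in> B" "x = c \<or> x = d"
      using \<gamma>_in by (cases \<gamma>) (auto simp: wing_blocks_def wings_of_def)
    then have "is_block a b x d \<or> is_block a b x c"
      using block_is_block is_block_swap_wings by blast
    then show ?thesis using \<gamma> by (auto simp: spine_of_def)
  qed
  obtain p1 q1 t1 where 1: "spine_of \<gamma>1 = {p1, q1}" "is_block p1 q1 x t1"
    using wing_block[of \<gamma>1] \<gamma> by auto
  obtain p2 q2 t2 where 2: "spine_of \<gamma>2 = {p2, q2}" "is_block p2 q2 x t2"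
    using wing_block[of \<gamma>2] \<gamma> by auto
  have in_B: "\<gamma>1 \<in> B" "\<gamma>2 \<in> B" "x \<in> wings_of \<gamma>1" "x \<in> wings_of \<gamma>2"
    using \<gamma>(1) unfolding wing_blocks_def by blast+
  have "spine_of \<gamma>1 \<inter> spine_of \<gamma>2 = {}"
  proof (rule ccontr)
    assume "spine_of \<gamma>1 \<inter> spine_of \<gamma>2 \<noteq> {}"
    then obtain p where p: "p \<in> spine_of \<gamma>1" "p \<in> spine_of \<gamma>2" by blast
    have "p \<noteq> x" using p 1 is_block_distinct[OF 1(2)] by auto
    then have "\<gamma>1 = \<gamma>2"
      using block_eq_if_common_edge[OF in_B(1,2) block_edges_spine_wing[OF p(1) in_B(3)]
          block_edges_spine_wing[OF p(2) in_B(4)]] by blast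
    with \<gamma>(2) show False ..
  qed
  moreover have "p \<in> spine_of \<gamma>1 \<union> spine_of \<gamma>2" if "wing p x" for p
  proof -
    obtain y u \<beta> where "\<beta> \<in> B" "spine_of \<beta> = {p, y}" "wings_of \<beta> = {x, u}"
      using \<open>wing p x\<close> by (auto simp: wing_def is_block_def)
    then have "\<beta> \<in> wing_blocks x" by (simp add: wing_blocks_def)
    then have "\<beta> = \<gamma>1 \<or> \<beta> = \<gamma>2" using \<gamma>(1) by blast
    with \<open>spine_of \<beta> = {p, y}\<close> show ?thesis by auto
  qed
  ultimately show ?thesis by (intro that[OF 1(2) 2(2)]) (use 1 2 in auto)
qed

definition spine_closed :: "'a set \<Rightarrow> bool" where
  "spine_closed C \<longleftrightarrow> C \<subseteq> X \<and> (\<forall>x\<in>C. \<forall>y. spine x y \<longrightarrow> y \<in> C)"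

lemma spine_closed_compl: "spine_closed C \<Longrightarrow> spine_closed (X - C)"
  unfolding spine_closed_def using spine_sym spine_distinct by blast

lemma spine_closed_finite: "spine_closed C \<Longrightarrow> finite C"
  unfolding spine_closed_def using finite_X finite_subset by blast

lemma card_spine_closed_split:
  assumes C: "spine_closed C" and x: "x \<in> C"
  shows "card C = 3 + card {w\<in>C. wing x w} + card {w\<in>C. wing w x}"
proof -
  have CX: "C \<subseteq> X" using C by (simp add: spine_closed_def)
  obtain y1 y2 where y: "y1 \<noteq> y2" "spine x y1" "spine x y2" "\<And>y. spine x y \<Longrightarrow> y = y1 \<or> y = y2"
    using spine_two_neighbours x CX by blast
  have yC: "y1 \<in> C" "y2 \<in> C" using C x y(2,3) by (auto simp: spine_closed_def)
  let ?N = "{y1, y2}" and ?W = "{w\<in>C. wing x w}" and ?P = "{w\<in>C. wing w x}"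
  have "C - {x} \<subseteq> ?N \<union> ?W \<union> ?P"
  proof
    fix w assume "w \<in> C - {x}"
    then show "w \<in> ?N \<union> ?W \<union> ?P" using spine_or_wing[of x w] x CX y(4) by blast
  qed
  moreover have "?N \<union> ?W \<union> ?P \<subseteq> C - {x}"
    using yC y(2,3) spine_distinct wing_asym by blast
  ultimately have "C - {x} = ?N \<union> ?W \<union> ?P" by (rule antisym)
  moreover have "?N \<inter> ?W = {}" "(?N \<union> ?W) \<inter> ?P = {}"
    using y(2,3) wing_not_spine wing_asym spine_sym by blast+
  moreover have "finite C" by (rule spine_closed_finite[OF C])
  ultimately have "card (C - {x}) = 2 + card ?W + card ?P"
    using y(1) by (simp add: card_Un_disjoint)
  then show ?thesis using card_Suc_Diff1[OF \<open>finite C\<close> x] by simp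
qed

text \<open>The vertices of which \<open>x\<close> is a wing form two disjoint spine edges, and a spine-closed set
  contains either both or neither end of each.\<close>

lemma even_card_spine_closed_wing_parents:
  assumes C: "spine_closed C" and x: "x \<in> C"
  shows "even (card {w\<in>C. wing w x})"
proof -
  have "x \<in> X" using C x by (auto simp: spine_closed_def)
  then obtain p1 q1 t1 p2 q2 t2 where b: "is_block p1 q1 x t1" "is_block p2 q2 x t2"
    and disj: "{p1, q1} \<inter> {p2, q2} = {}" and parents: "\<And>p. wing p x \<Longrightarrow> p \<in> {p1, q1, p2, q2}"
    using wing_parents by blast
  have "wing p1 x" "wing q1 x" "wing p2 x" "wing q2 x"
    using is_block_wing[OF b(1)] is_block_wing[OF b(2)] by auto
  moreover have "p1 \<in> C \<longleftrightarrow> q1 \<in> C" "p2 \<in> C \<longleftrightarrow> q2 \<in> C"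
    using C is_block_spine[OF b(1)] is_block_spine[OF b(2)] spine_sym
    by (auto simp: spine_closed_def)
  ultimately have "{w\<in>C. wing w x} =
      (if p1 \<in> C then {p1, q1} else {}) \<union> (if p2 \<in> C then {p2, q2} else {})"
    using parents by auto
  moreover have "p1 \<noteq> q1" "p2 \<noteq> q2"
    using is_block_distinct[OF b(1)] is_block_distinct[OF b(2)] by auto
  ultimately show ?thesis using disj by (simp add: card_Un_disjoint)
qed

lemma spine_closed_card:
  assumes C: "spine_closed C" and "C \<noteq> {}"
  shows "3 \<le> card C" "card C \<noteq> 4" "4 dvd card C * (card C - 3)"
proof -
  let ?W = "\<lambda>x. card {w\<in>C. wing x w}" and ?P = "\<lambda>x. card {w\<in>C. wing w x}"
  have fin: "finite C" by (rule spine_closed_finite[OF C])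
  have split: "card C = 3 + ?W x + ?P x" if "x \<in> C" for x
    using card_spine_closed_split[OF C that] .
  have swap: "(\<Sum>x\<in>C. ?W x) = (\<Sum>x\<in>C. ?P x)"
    by (rule sum_card_swap[OF fin fin])
  obtain x where "x \<in> C" using \<open>C \<noteq> {}\<close> by blast
  then show "3 \<le> card C" using split by fastforce
  have "card C * card C = (\<Sum>x\<in>C. card C)" by simp
  also have "\<dots> = (\<Sum>x\<in>C. 3 + ?W x + ?P x)"
    by (rule sum.cong[OF refl split])
  also have "\<dots> = 3 * card C + 2 * (\<Sum>x\<in>C. ?P x)"
    by (simp add: sum.distrib swap)
  finally have total: "card C * (card C - 3) = 2 * (\<Sum>x\<in>C. ?P x)"
    by (simp add: diff_mult_distrib2)
  have "even (\<Sum>x\<in>C. ?P x)"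
    using even_card_spine_closed_wing_parents[OF C] by (simp add: dvd_sum)
  then show "4 dvd card C * (card C - 3)"
    unfolding total by (auto elim!: evenE)
  show "card C \<noteq> 4"
  proof
    assume "card C = 4"
    then have "?P x = 0 \<and> ?W x = 1" if "x \<in> C" for x
      using split[OF that] even_card_spine_closed_wing_parents[OF C that] by presburger
    then have "(\<Sum>x\<in>C. ?W x) = 4" "(\<Sum>x\<in>C. ?P x) = 0"
      using \<open>card C = 4\<close> by simp_all
    with swap show False by simp
  qed
qed

lemma wing_spine_block_cases:
  assumes "wing v x" "spine v p" "spine v q" "p \<noteq> q"
  shows "(\<exists>t. is_block v p x t) \<or> (\<exists>t. is_block v q x t)"
proof -
  obtain y t where b: "is_block v y x t" using assms(1) by (auto simp: wing_def)
  have "y = p \<or> y = q"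
    using spine_graph.neighbour_cases[OF assms(2-4) is_block_spine[OF b]] .
  then show ?thesis using b by blast
qed

lemma wing_other_spine_block:
  assumes "wing v x" "spine v p" "spine v q" "p \<noteq> q" and "spine p x \<or> wing x p"
  shows "\<exists>t. is_block v q x t"
  using wing_spine_block_cases[OF assms(1-4)] assms(5) is_block_wing wing_not_spine wing_asym
  by blast

lemma no_spine_block_for_wing:
  assumes "wing v x" "spine v p" "spine v q" "p \<noteq> q"
    and "spine p x \<or> wing x p" "spine q x \<or> wing x q"
  shows False
  using wing_other_spine_block[OF assms(1-5)] assms(6) is_block_wing wing_not_spine wing_asym
  by blast

lemma spine_cycle_closed:
  assumes dist: "distinct xs" and len: "3 \<le> length xs" and cyc: "list_all2 spine xs (rotate1 xs)"
  shows "spine_closed (set xs)"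
proof -
  let ?n = "length xs"
  have step: "spine (xs ! i) (xs ! (Suc i mod ?n))" if "i < ?n" for i
    using cyc that by (simp add: list_all2_conv_all_nth nth_rotate1)
  have "y \<in> set xs" if x: "x \<in> set xs" and xy: "spine x y" for x y
  proof -
    obtain i where i: "i < ?n" "x = xs ! i" using x by (auto simp: in_set_conv_nth)
    define j where "j = (i + ?n - 1) mod ?n"
    have j: "j < ?n" "Suc j mod ?n = i"
    proof -
      show "j < ?n" using len unfolding j_def by (intro mod_less_divisor) auto
      have "Suc (i + ?n - 1) = i + ?n" using len by simp
      then show "Suc j mod ?n = i" using i(1) by (simp add: j_def mod_Suc_eq)
    qed
    have "j \<noteq> Suc i mod ?n"
    proof (cases i)
      case 0
      then show ?thesis using len by (simp add: j_def)
    next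
      case (Suc k)
      then have "j = k" using i(1) by (simp add: j_def)
      then show ?thesis using Suc i(1) len by (auto simp: mod_Suc)
    qed
    moreover have "Suc i mod ?n < ?n" using len by (intro mod_less_divisor) auto
    ultimately have "xs ! j \<noteq> xs ! (Suc i mod ?n)"
      using dist j(1) by (simp add: nth_eq_iff_index_eq)
    moreover have "spine x (xs ! j)" "spine x (xs ! (Suc i mod ?n))"
      using spine_sym[OF step[OF j(1)]] step[OF i(1)] i(2) j(2) by simp_all
    ultimately have "y = xs ! j \<or> y = xs ! (Suc i mod ?n)"
      using spine_graph.neighbour_cases xy by blast
    then show ?thesis using j(1) \<open>Suc i mod ?n < ?n\<close> by auto
  qed
  moreover have "set xs \<subseteq> X"
    using step spine_distinct len by (fastforce simp: in_set_conv_nth)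
  ultimately show ?thesis by (auto simp: spine_closed_def)
qed

lemma spine_cycle_length:
  assumes "distinct xs" "3 \<le> length xs" "list_all2 spine xs (rotate1 xs)"
  shows "length xs \<notin> {4, 5, 6}"
proof -
  have "set xs \<noteq> {}" using assms(2) by auto
  from spine_closed_card[OF spine_cycle_closed[OF assms] this] show ?thesis
    using distinct_card[OF assms(1)] by auto
qed

section \<open>There is no spine triangle\<close>

text \<open>In the lemmas below \<open>s1 s2 s3\<close> is a spine triangle with blocks \<open>[s1,s2,a-b]\<close>,
  \<open>[s1,s3,c-d]\<close>, \<open>[s2,s3,e-f]\<close>, and \<open>g, h\<close> are the two remaining vertices. Read from the last
  lemma upwards, each step forces more blocks and spine edges: a block \<open>[g,h,s1-s2]\<close>, then
  blocks \<open>[g,a,s3-w]\<close> and \<open>[h,b,s3-w']\<close>, then the spine cycle through the eight vertices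
  outside the triangle, which \<open>triangle_cycle_absurd\<close> finally refutes.\<close>

lemma triangle_cycle_absurd:
  assumes dist: "distinct [s1,s2,s3,g,h,a,b,x1,x2,x3,x4]"
    and X_eq: "X = {s1,s2,s3,g,h,a,b,x1,x2,x3,x4}"
    and spines: "spine s1 s2" "spine s1 s3" "spine s2 s3" "spine g h" "spine g a" "spine h b"
      "spine b x1" "spine x1 x2" "spine x2 x3" "spine x3 x4" "spine x4 a"
    and blocks: "is_block s1 s2 a b" "is_block s1 s3 x1 x2" "is_block s2 s3 x3 x4"
      "is_block g h s1 s2" "is_block g a s3 w" "is_block h b s3 w'"
  shows False
proof -
  note nbr = spine_graph.neighbour_cases
  note neq = dist[simplified]
  have nbrs_s1: "\<And>y. spine s1 y \<Longrightarrow> y = s2 \<or> y = s3"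
    using nbr[OF spines(1) spines(2)] neq by blast
  have nbrs_s2: "\<And>y. spine s2 y \<Longrightarrow> y = s1 \<or> y = s3"
    using nbr[OF spine_sym[OF spines(1)] spines(3)] neq by blast
  have nbrs_s3: "\<And>y. spine s3 y \<Longrightarrow> y = s1 \<or> y = s2"
    using nbr[OF spine_sym[OF spines(2)] spine_sym[OF spines(3)]] neq by blast
  have nbrs_g: "\<And>y. spine g y \<Longrightarrow> y = h \<or> y = a"
    using nbr[OF spines(4) spines(5)] neq by blast
  have nbrs_h: "\<And>y. spine h y \<Longrightarrow> y = g \<or> y = b"
    using nbr[OF spine_sym[OF spines(4)] spines(6)] neq by blast
  have nbrs_a: "\<And>y. spine a y \<Longrightarrow> y = g \<or> y = x4"
    using nbr[OF spine_sym[OF spines(5)] spine_sym[OF spines(11)]] neq by blast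
  have nbrs_b: "\<And>y. spine b y \<Longrightarrow> y = h \<or> y = x1"
    using nbr[OF spine_sym[OF spines(6)] spines(7)] neq by blast
  have nbrs_x1: "\<And>y. spine x1 y \<Longrightarrow> y = b \<or> y = x2"
    using nbr[OF spine_sym[OF spines(7)] spines(8)] neq by blast
  have nbrs_x2: "\<And>y. spine x2 y \<Longrightarrow> y = x1 \<or> y = x3"
    using nbr[OF spine_sym[OF spines(8)] spines(9)] neq by blast
  have nbrs_x3: "\<And>y. spine x3 y \<Longrightarrow> y = x2 \<or> y = x4"
    using nbr[OF spine_sym[OF spines(9)] spines(10)] neq by blast
  have nbrs_x4: "\<And>y. spine x4 y \<Longrightarrow> y = x3 \<or> y = a"
    using nbr[OF spine_sym[OF spines(10)] spines(11)] neq by blast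
  have inX: "s1 \<in> X" "s2 \<in> X" "s3 \<in> X" "g \<in> X" "h \<in> X" "a \<in> X" "b \<in> X"
    "x1 \<in> X" "x2 \<in> X" "x3 \<in> X" "x4 \<in> X"
    using X_eq by auto
  have wings_g: "\<And>v. wing g v \<Longrightarrow> v \<in> {s1,s2,s3,w}"
    using wing_in_blocks[OF _ _ blocks(4) blocks(5)] neq by blast
  have wings_h: "\<And>v. wing h v \<Longrightarrow> v \<in> {s1,s2,s3,w'}"
    using wing_in_blocks[OF _ _ is_block_swap_spine[OF blocks(4)] blocks(6)] neq by blast
  have wings_s1: "\<And>v. wing s1 v \<Longrightarrow> v \<in> {a,b,x1,x2}"
    using wing_in_blocks[OF _ _ blocks(1) blocks(2)] neq by blast
  have wings_s2: "\<And>v. wing s2 v \<Longrightarrow> v \<in> {a,b,x3,x4}"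
    using wing_in_blocks[OF _ _ is_block_swap_spine[OF blocks(1)] blocks(3)] neq by blast
  have spines': "spine s2 s1" "spine s3 s1" "spine s3 s2" "spine h g" "spine a g" "spine b h"
    "spine x1 b" "spine x2 x1" "spine x3 x2" "spine x4 x3" "spine a x4"
    using spines spine_sym by blast+
  have "\<not> spine g w" "\<not> spine a w" "\<not> spine h w'" "\<not> spine b w'"
    using is_block_wing_not_spine is_block_swap_wings is_block_swap_spine blocks(5,6) by blast+
  moreover have "{s1, s2} \<inter> {s3, w} = {}" "{s1, s2} \<inter> {s3, w'} = {}"
    using is_block_wings_disjoint[OF blocks(4,5)]
      is_block_wings_disjoint[OF is_block_swap_spine[OF blocks(4)] blocks(6)] neq by auto
  ultimately have W: "w \<in> {b,x1,x2,x3}" and W': "w' \<in> {a,x2,x3,x4}"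
    using is_block_distinct[OF blocks(5)] is_block_distinct[OF blocks(6)] X_eq spines spines'
    by auto
  have known_wings: "wing g s3" "wing g w" "wing a s3" "wing a w" "wing h s3" "wing h w'"
    "wing b s3" "wing b w'" "wing s1 a" "wing s1 b" "wing s2 a" "wing s2 b" "wing s1 x1"
    "wing s1 x2" "wing s3 x1" "wing s3 x2" "wing s2 x3" "wing s2 x4" "wing s3 x3" "wing s3 x4"
    "wing g s1" "wing g s2" "wing h s1" "wing h s2"
    using is_block_wing blocks by blast+
  have "wing x1 h" by (rule wing_if_not_spine_not_wing) (use inX neq nbrs_h wings_h W' in auto)
  from wing_other_spine_block[OF this spine_sym[OF spines(7)] spines(8)]
    obtain t2 where bh: "is_block x1 x2 h t2"
    using neq spines(6) spines spines' by force
  have "wing x1 s2" by (rule wing_if_not_spine_not_wing) (use inX neq nbrs_s2 wings_s2 in auto)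
  from wing_other_spine_block[OF this spine_sym[OF spines(7)] spines(8)]
    obtain t where bs2: "is_block x1 x2 s2 t"
    using neq known_wings spines spines' by force
  have "wing x3 s1" by (rule wing_if_not_spine_not_wing) (use inX neq nbrs_s1 wings_s1 in auto)
  from wing_other_spine_block[OF this spine_sym[OF spines(9)] spines(10)]
    obtain t' where bs1: "is_block x3 x4 s1 t'"
    using neq known_wings spines spines' by force
  consider (w_b) "w = b" | (w_x1) "w = x1" | (w_x2) "w = x2" | (w_x3) "w = x3" using W by blast
  then show False
  proof cases
    case w_b
    have "wing x1 g" by (rule wing_if_not_spine_not_wing) (use inX neq nbrs_g wings_g w_b in auto)
    from wing_other_spine_block[OF this spine_sym[OF spines(7)] spines(8)]
      obtain t1 where "is_block x1 x2 g t1"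
      using neq known_wings w_b spines spines' by force
    from is_block_three_wings[OF bs2 this bh] neq show False by simp
  next
    case w_x1
    have "wing b g" by (rule wing_if_not_spine_not_wing) (use inX neq nbrs_g wings_g w_x1 in auto)
    from no_spine_block_for_wing[OF this spine_sym[OF spines(6)] spines(7)] show False
      using neq spines(4) known_wings w_x1 spines spines' by force
  next
    case w_x3
    have "wing x4 g" by (rule wing_if_not_spine_not_wing) (use inX neq nbrs_g wings_g w_x3 in auto)
    from no_spine_block_for_wing[OF this spines(11) spine_sym[OF spines(10)]] show False
      using neq spines(5) known_wings w_x3 spine_sym spines spines' by force
  next
    case w_x2
    have "wing x4 g" by (rule wing_if_not_spine_not_wing) (use inX neq nbrs_g wings_g w_x2 in auto)
    from wing_other_spine_block[OF this spines(11) spine_sym[OF spines(10)]]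
      obtain t1 where "is_block x4 x3 g t1"
      using neq spines(5) spine_sym spines spines' by force
    hence bg: "is_block x3 x4 g t1" by (rule is_block_swap_spine)
    consider (w'_a) "w' = a" | (w'_x2) "w' = x2" | (w'_x3) "w' = x3" | (w'_x4) "w' = x4"
      using W' by blast
    then show False
    proof cases
      case w'_a
      have "wing x4 h" by (rule wing_if_not_spine_not_wing)
        (use inX neq nbrs_h wings_h w'_a in auto)
      from wing_other_spine_block[OF this spines(11) spine_sym[OF spines(10)]]
        obtain t3 where "is_block x4 x3 h t3"
        using neq known_wings w'_a spines spines' by force
      hence "is_block x3 x4 h t3" by (rule is_block_swap_spine)
      from is_block_three_wings[OF bs1 bg this] neq show False by simp
    next
      case w'_x2
      have "wing x1 h" by (rule wing_if_not_spine_not_wing)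
        (use inX neq nbrs_h wings_h w'_x2 in auto)
      from no_spine_block_for_wing[OF this spine_sym[OF spines(7)] spines(8)] show False
        using neq spines(6) known_wings w'_x2 spines spines' by force
    next
      case w'_x4
      have "wing a h" by (rule wing_if_not_spine_not_wing)
        (use inX neq nbrs_h wings_h w'_x4 in auto)
      from no_spine_block_for_wing[OF this spine_sym[OF spines(5)] spine_sym[OF spines(11)]]
      show False
        using neq spines(4) known_wings w'_x4 spines spines' by force
    next
      case w'_x3
      have "wing x4 h" by (rule wing_if_not_spine_not_wing)
        (use inX neq nbrs_h wings_h w'_x3 in auto)
      from wing_other_spine_block[OF this spine_sym[OF spines(10)] spines(11)]
        obtain q where bq: "is_block x4 a h q"
        using neq known_wings w'_x3 spines spines' by force
      have ka1: "is_block a g s3 x2" using is_block_swap_spine[OF blocks(5)] w_x2 by simp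
      have ka2: "is_block a x4 h q" using is_block_swap_spine[OF bq] .
      have wings_a: "\<And>v. wing a v \<Longrightarrow> v \<in> {s3,x2,h,q}"
        using wing_in_blocks[OF _ _ ka1 ka2] neq by blast
      have qX: "q \<in> X" "q \<noteq> x4" "q \<noteq> a" "q \<noteq> h"
        using is_block_distinct[OF bq] by auto
      have q1: "q \<noteq> x3"
        using is_block_wing_not_spine[OF is_block_swap_wings[OF bq]] spines(10) spine_sym by blast
      have q2: "q \<noteq> g"
        using is_block_wing_not_spine[OF is_block_swap_wings[OF ka2]] spines'(5) by blast
      have "q \<notin> {s3, x2, s1}"
        using is_block_wings_disjoint[OF ka1 ka2]
          is_block_wings_disjoint[OF is_block_swap_spine[OF bs1] bq] neq by auto
      have q6: "q \<noteq> s2"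
      proof
        assume "q = s2" hence "wing a s2" using is_block_wing[OF ka2] by simp
        thus False using known_wings wing_asym by blast
      qed
      have "q = b \<or> q = x1" using qX q1 q2 \<open>q \<notin> {s3, x2, s1}\<close> q6 X_eq by auto
      then show False
      proof
        assume qb: "q = b"
        have "wing x1 a" by (rule wing_if_not_spine_not_wing)
          (use inX neq nbrs_a wings_a qb in auto)
        from no_spine_block_for_wing[OF this spine_sym[OF spines(7)] spines(8)] show False
          using neq is_block_wing[OF ka2] qb is_block_wing[OF ka1] spines spines' by force
      next
        assume qx: "q = x1"
        have "wing b a" by (rule wing_if_not_spine_not_wing) (use inX neq nbrs_a wings_a qx in auto)
        from no_spine_block_for_wing[OF this spine_sym[OF spines(6)] spines(7)] show False
          using neq is_block_wing[OF ka2] qx spines spines' by force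
      qed
    qed
  qed
qed

lemma triangle_absurd_a_c_b_e:
  assumes dist: "distinct [s1,s2,s3,g,h,a,b,c,d,e,f]"
    and X_eq: "X = {s1,s2,s3,g,h,a,b,c,d,e,f}"
    and spines: "spine s1 s2" "spine s1 s3" "spine s2 s3" "spine g h" "spine g a" "spine h b"
      "spine c d" "spine e f" "spine a c" "spine b e"
    and blocks: "is_block s1 s2 a b" "is_block s1 s3 c d" "is_block s2 s3 e f" "is_block g h s1 s2"
      "is_block g a s3 w" "is_block h b s3 w'"
  shows False
proof -
  note neq = dist[simplified]
  note nbr = spine_graph.neighbour_cases
  obtain y where y: "spine f y" "y \<noteq> e"
    using spine_two_neighbours[of f] X_eq by auto
  have not_nbr: "y \<noteq> u" if "spine u p" "spine u q" "p \<noteq> q" "f \<notin> {p, q}" for u p q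
    using nbr[OF that(1-3), of f] spine_sym[OF y(1)] that(4) by blast
  have "y \<notin> {s1, s2, s3, g, h, a, b, c}"
    using not_nbr[OF spines(1,2)] not_nbr[OF spine_sym[OF spines(1)] spines(3)]
      not_nbr[OF spine_sym[OF spines(2)] spine_sym[OF spines(3)]] not_nbr[OF spines(4,5)]
      not_nbr[OF spine_sym[OF spines(4)] spines(6)] not_nbr[OF spine_sym[OF spines(5)] spines(9)]
      not_nbr[OF spine_sym[OF spines(6)] spines(10)] not_nbr[OF spines(7) spine_sym[OF spines(9)]]
      neq by auto
  then have "y = d" using spine_distinct[OF y(1)] y(2) X_eq by auto
  with y(1) have "spine f d" by simp
  have "distinct [s2,s1,s3,g,h,a,b,e,f,d,c]" "X = {s2,s1,s3,g,h,a,b,e,f,d,c}"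
    using neq X_eq by auto
  from this spine_sym[OF spines(1)] spines(3,2,4,5,6,10,8) \<open>spine f d\<close>
    spine_sym[OF spines(7)] spine_sym[OF spines(9)] is_block_swap_spine[OF blocks(1)] blocks(3)
    is_block_swap_wings[OF blocks(2)] is_block_swap_wings[OF blocks(4)] blocks(5,6)
  show False by (rule triangle_cycle_absurd)
qed

lemma triangle_absurd_crossing:
  assumes dist: "distinct [s1,s2,s3,g,h,a,b,c,d,e,f]"
    and X_eq: "X = {s1,s2,s3,g,h,a,b,c,d,e,f}"
    and spines: "spine s1 s2" "spine s1 s3" "spine s2 s3" "spine g h" "spine g a" "spine h b"
      "spine c d" "spine e f" "spine a x" "spine b y"
    and xy: "x \<in> {c, d}" "y \<in> {e, f}"
    and blocks: "is_block s1 s2 a b" "is_block s1 s3 c d" "is_block s2 s3 e f" "is_block g h s1 s2"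
      "is_block g a s3 w" "is_block h b s3 w'"
  shows False
proof -
  note neq = dist[simplified]
  note absurd = triangle_absurd_a_c_b_e[OF _ _ spines(1-6)]
  have cd: "distinct [s1,s2,s3,g,h,a,b,d,c,e,f]" "X = {s1,s2,s3,g,h,a,b,d,c,e,f}"
    using neq X_eq by auto
  have ef: "distinct [s1,s2,s3,g,h,a,b,c,d,f,e]" "X = {s1,s2,s3,g,h,a,b,c,d,f,e}"
    using neq X_eq by auto
  have cdef: "distinct [s1,s2,s3,g,h,a,b,d,c,f,e]" "X = {s1,s2,s3,g,h,a,b,d,c,f,e}"
    using neq X_eq by auto
  note swapped = spine_sym[OF spines(7)] spine_sym[OF spines(8)]
    is_block_swap_wings[OF blocks(2)] is_block_swap_wings[OF blocks(3)]
  consider "x = c" "y = e" | "x = c" "y = f" | "x = d" "y = e" | "x = d" "y = f"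
    using xy by blast
  then show False
  proof cases
    case 1
    then show ?thesis using absurd[OF dist X_eq spines(7,8) _ _ blocks] spines(9,10) by simp
  next
    case 2
    then show ?thesis
      using absurd[OF ef spines(7) swapped(2) _ _ blocks(1,2) swapped(4) blocks(4-6)] spines(9,10)
      by simp
  next
    case 3
    then show ?thesis
      using absurd[OF cd swapped(1) spines(8) _ _ blocks(1) swapped(3) blocks(3-6)] spines(9,10)
      by simp
  next
    case 4
    then show ?thesis
      using absurd[OF cdef swapped(1,2) _ _ blocks(1) swapped(3,4) blocks(4-6)] spines(9,10)
      by simp
  qed
qed


lemma triangle_wing_pair_spine:
  assumes dist: "distinct [s1,s2,s3,g,h,a,b,c,d,e,f]"
    and X_eq: "X = {s1,s2,s3,g,h,a,b,c,d,e,f}"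
    and spines: "spine s1 s2" "spine s2 s3"
    and blocks: "is_block s1 s2 a b" "is_block s2 s3 e f" "is_block g h s1 s2"
  shows "spine c d"
proof -
  note neq = dist[simplified]
  have nbrs_s2: "\<And>y. spine s2 y \<Longrightarrow> y = s1 \<or> y = s3"
    using spine_graph.neighbour_cases[OF spine_sym[OF spines(1)] spines(2)] neq by blast
  have wings_s2: "\<And>v. wing s2 v \<Longrightarrow> v \<in> {a,b,e,f}"
    using wing_in_blocks[OF _ _ is_block_swap_spine[OF blocks(1)] blocks(2)] neq by blast
  have known_wings: "wing s2 a" "wing s2 b" "wing s2 e" "wing s2 f"
    using is_block_wing blocks(1,2) by blast+
  have "wing c s2"
    by (rule wing_if_not_spine_not_wing) (use X_eq neq nbrs_s2 wings_s2 in auto)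
  then obtain y t where bc: "is_block c y s2 t" by (auto simp: wing_def)
  have y: "y \<in> X" "y \<noteq> c" "y \<noteq> s2" "\<not> spine y s2" "\<not> wing s2 y"
    using is_block_distinct[OF bc] is_block_wing_not_spine[OF is_block_swap_spine[OF bc]]
      is_block_wing[OF bc] wing_asym by auto
  have "y \<noteq> g"
  proof
    assume "y = g"
    with bc have "is_block g c s2 t" using is_block_swap_spine by blast
    with is_block_determined[OF is_block_swap_wings[OF blocks(3)]] neq show False by blast
  qed
  moreover have "y \<noteq> h"
  proof
    assume "y = h"
    with bc have "is_block h c s2 t" using is_block_swap_spine by blast
    with is_block_determined[OF is_block_swap_wings[OF is_block_swap_spine[OF blocks(3)]]] neq
    show False by blast
  qed
  ultimately have "y = d"
    using y known_wings spines(1) spine_sym[OF spines(2)] X_eq by auto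
  then show ?thesis using is_block_spine[OF bc] by simp
qed

lemma triangle_absurd_s3_blocks:
  assumes dist: "distinct [s1,s2,s3,g,h,a,b,c,d,e,f]"
    and X_eq: "X = {s1,s2,s3,g,h,a,b,c,d,e,f}"
    and spines: "spine s1 s2" "spine s1 s3" "spine s2 s3" "spine g h" "spine g a" "spine h b"
    and blocks: "is_block s1 s2 a b" "is_block s1 s3 c d" "is_block s2 s3 e f" "is_block g h s1 s2"
      "is_block g a s3 w" "is_block h b s3 w'"
  shows False
proof -
  note neq = dist[simplified]
  note nbr = spine_graph.neighbour_cases
  have dist': "distinct [s2,s1,s3,g,h,a,b,e,f,c,d]" and X_eq': "X = {s2,s1,s3,g,h,a,b,e,f,c,d}"
    using neq X_eq by auto
  have cd: "spine c d"
    by (rule triangle_wing_pair_spine[OF dist X_eq spines(1,3) blocks(1,3,4)])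
  have ef: "spine e f"
    by (rule triangle_wing_pair_spine[OF dist' X_eq' spine_sym[OF spines(1)] spines(2)
          is_block_swap_spine[OF blocks(1)] blocks(2) is_block_swap_wings[OF blocks(4)]])
  have nbrs_s1: "\<And>y. spine s1 y \<Longrightarrow> y = s2 \<or> y = s3"
    using nbr[OF spines(1) spines(2)] neq by blast
  have nbrs_s2: "\<And>y. spine s2 y \<Longrightarrow> y = s1 \<or> y = s3"
    using nbr[OF spine_sym[OF spines(1)] spines(3)] neq by blast
  have nbrs_s3: "\<And>y. spine s3 y \<Longrightarrow> y = s1 \<or> y = s2"
    using nbr[OF spine_sym[OF spines(2)] spine_sym[OF spines(3)]] neq by blast
  have nbrs_g: "\<And>y. spine g y \<Longrightarrow> y = h \<or> y = a"
    using nbr[OF spines(4) spines(5)] neq by blast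
  have nbrs_h: "\<And>y. spine h y \<Longrightarrow> y = g \<or> y = b"
    using nbr[OF spine_sym[OF spines(4)] spines(6)] neq by blast
  obtain x where x: "spine a x" "x \<noteq> g"
    using spine_two_neighbours[of a] X_eq by auto
  obtain y where y: "spine b y" "y \<noteq> h"
    using spine_two_neighbours[of b] X_eq by auto
  \<comment> \<open>\<open>x\<close> and \<open>y\<close> lie in different pairs among \<open>c, d, e, f\<close>, as there are no spine cycles of
    length 4, 5 or 6\<close>
  have "\<not> spine a b"
  proof
    assume "spine a b"
    then have "list_all2 spine [g, h, b, a] (rotate1 [g, h, b, a])"
      using spines(4,6) spine_sym[OF spines(5)] spine_sym by simp
    from spine_cycle_length[OF _ _ this] neq show False by auto
  qed
  have "x \<in> {c,d,e,f}"
    using spine_distinct[OF x(1)] x spine_sym[OF x(1)] X_eq nbrs_s1 nbrs_s2 nbrs_s3 nbrs_h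
      \<open>\<not> spine a b\<close> neq by auto
  moreover have "y \<in> {c,d,e,f}"
    using spine_distinct[OF y(1)] y spine_sym[OF y(1)] spine_sym[OF spines(5)] X_eq
      nbrs_s1 nbrs_s2 nbrs_s3 nbrs_g \<open>\<not> spine a b\<close> neq by auto
  moreover have "x \<noteq> y"
  proof
    assume "x = y"
    then have "list_all2 spine [g, h, b, y, a] (rotate1 [g, h, b, y, a])"
      using spines(4,6) spine_sym[OF spines(5)] x(1) y(1) spine_sym by simp
    from spine_cycle_length[OF _ _ this] neq \<open>y \<in> {c,d,e,f}\<close> show False by auto
  qed
  moreover have "\<not> spine y x"
  proof
    assume "spine y x"
    then have "list_all2 spine [g, h, b, y, x, a] (rotate1 [g, h, b, y, x, a])"
      using spines(4,6) spine_sym[OF spines(5)] x(1) y(1) spine_sym by simp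
    from spine_cycle_length[OF _ _ this] neq \<open>x \<noteq> y\<close> \<open>x \<in> {c,d,e,f}\<close> \<open>y \<in> {c,d,e,f}\<close>
    show False by auto
  qed
  ultimately have "x \<in> {c, d} \<and> y \<in> {e, f} \<or> x \<in> {e, f} \<and> y \<in> {c, d}"
    using cd ef spine_sym by auto
  then show False
  proof
    assume "x \<in> {c, d} \<and> y \<in> {e, f}"
    then show False
      using triangle_absurd_crossing[OF dist X_eq spines cd ef x(1) y(1) _ _ blocks] by blast
  next
    assume "x \<in> {e, f} \<and> y \<in> {c, d}"
    then show False
      using triangle_absurd_crossing[OF dist' X_eq' spine_sym[OF spines(1)] spines(3) spines(2)
          spines(4-6) ef cd x(1) y(1) _ _ is_block_swap_spine[OF blocks(1)] blocks(3) blocks(2)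
          is_block_swap_wings[OF blocks(4)] blocks(5,6)] by blast
  qed
qed

lemma triangle_absurd_gh_block:
  assumes dist: "distinct [s1,s2,s3,g,h,a,b,c,d,e,f]"
    and X_eq: "X = {s1,s2,s3,g,h,a,b,c,d,e,f}"
    and spines: "spine s1 s2" "spine s1 s3" "spine s2 s3"
    and blocks: "is_block s1 s2 a b" "is_block s1 s3 c d" "is_block s2 s3 e f" "is_block g h s1 s2"
  shows False
proof -
  note neq = dist[simplified]
  note nbr = spine_graph.neighbour_cases
  have nbrs_s: "y \<in> {s1, s2, s3}" if "spine s y" "s \<in> {s1, s2, s3}" for s y
    using that nbr[OF spines(1,2)] nbr[OF spine_sym[OF spines(1)] spines(3)]
      nbr[OF spine_sym[OF spines(2)] spine_sym[OF spines(3)]] neq by blast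
  have wings_s3: "\<And>v. wing s3 v \<Longrightarrow> v \<in> {c,d,e,f}"
    using wing_in_blocks[OF _ _ is_block_swap_spine[OF blocks(2)] is_block_swap_spine[OF blocks(3)]]
      neq by blast
  have s3_block: "\<exists>x w. x \<in> {a, b} \<and> is_block u x s3 w"
    if uv: "is_block u v s1 s2" "{u, v} = {g, h}" for u v
  proof -
    have u: "u \<in> X" "u \<notin> {s1,s2,s3,c,d,e,f}" "v \<noteq> u"
      using uv(2) X_eq neq by (auto simp: doubleton_eq_iff)
    have "wing u s3"
      by (rule wing_if_not_spine_not_wing) (use u X_eq nbrs_s wings_s3 spine_sym in auto)
    obtain x where x: "spine u x" "x \<noteq> v" using spine_two_neighbours[OF u(1)] by metis
    have "\<not> (\<exists>t. is_block u v s3 t)"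
      using is_block_wings_unique[OF uv(1)] neq by (auto simp: doubleton_eq_iff)
    then obtain w where w: "is_block u x s3 w"
      using wing_spine_block_cases[OF \<open>wing u s3\<close> is_block_spine[OF uv(1)] x(1) x(2)[symmetric]]
      by blast
    have "x \<notin> {s1, s2, s3}" using nbrs_s spine_sym[OF x(1)] u(2) by blast
    moreover have "\<not> wing s3 x" using is_block_wing[OF w] wing_asym by blast
    moreover have "wing s3 c" "wing s3 d" "wing s3 e" "wing s3 f"
      using is_block_wing blocks by blast+
    ultimately have "x \<in> {a, b}"
      using spine_distinct[OF x(1)] x(2) uv(2) X_eq by (auto simp: doubleton_eq_iff)
    with w show ?thesis by blast
  qed
  obtain x w where x: "x \<in> {a, b}" "is_block g x s3 w"
    using s3_block[OF blocks(4)] by blast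
  obtain y w' where y: "y \<in> {a, b}" "is_block h y s3 w'"
    using s3_block[OF is_block_swap_spine[OF blocks(4)]] by (auto simp: insert_commute)
  have "x \<noteq> y"
  proof
    assume "x = y"
    with is_block_determined[OF is_block_swap_spine[OF x(2)]] is_block_swap_spine[OF y(2)] neq
    show False by auto
  qed
  have "spine g h" using is_block_spine[OF blocks(4)] .
  show False
  proof (cases "x = a")
    case True
    with x y \<open>x \<noteq> y\<close> have "is_block g a s3 w" "is_block h b s3 w'" by auto
    then show False
      using triangle_absurd_s3_blocks[OF dist X_eq spines \<open>spine g h\<close> _ _ blocks] is_block_spine
      by blast
  next
    case False
    with x y \<open>x \<noteq> y\<close> have "is_block g b s3 w" "is_block h a s3 w'" by auto
    moreover have "distinct [s1,s2,s3,g,h,b,a,c,d,e,f]" "X = {s1,s2,s3,g,h,b,a,c,d,e,f}"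
      using neq X_eq by auto
    ultimately show False
      using triangle_absurd_s3_blocks[OF _ _ spines \<open>spine g h\<close> _ _
          is_block_swap_wings[OF blocks(1)] blocks(2-4)] is_block_spine
      by blast
  qed
qed

lemma spine_triangle_labelling:
  assumes spines: "spine s1 s2" "spine s1 s3" "spine s2 s3"
  obtains a b c d e f g h where "distinct [s1,s2,s3,g,h,a,b,c,d,e,f]"
    "X = {s1,s2,s3,g,h,a,b,c,d,e,f}"
    "is_block s1 s2 a b" "is_block s1 s3 c d" "is_block s2 s3 e f"
proof -
  obtain a b where K1: "is_block s1 s2 a b" using spines(1) by (auto simp: spine_def)
  obtain c d where K2: "is_block s1 s3 c d" using spines(2) by (auto simp: spine_def)
  obtain e f where K3: "is_block s2 s3 e f" using spines(3) by (auto simp: spine_def)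
  have n: "s1 \<noteq> s2" "s1 \<noteq> s3" "s2 \<noteq> s3" using spine_distinct spines by auto
  have "{a, b} \<inter> {c, d} = {}" "{a, b} \<inter> {e, f} = {}" "{c, d} \<inter> {e, f} = {}"
    using is_block_wings_disjoint[OF K1 K2]
      is_block_wings_disjoint[OF is_block_swap_spine[OF K1] K3]
      is_block_wings_disjoint[OF is_block_swap_spine[OF K2] is_block_swap_spine[OF K3]] n
    by auto
  moreover have "a \<noteq> s3" "b \<noteq> s3" "c \<noteq> s2" "d \<noteq> s2" "e \<noteq> s1" "f \<noteq> s1"
    using is_block_wing K1 K2 K3 wing_not_spine spines spine_sym by blast+
  moreover note is_block_distinct[OF K1] is_block_distinct[OF K2] is_block_distinct[OF K3]
  ultimately have nine: "distinct [s1,s2,s3,a,b,c,d,e,f]" "{s1,s2,s3,a,b,c,d,e,f} \<subseteq> X"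
    using n by auto
  then have "card (X - {s1,s2,s3,a,b,c,d,e,f}) = 2"
    using card_Diff_subset[OF _ nine(2)] distinct_card[OF nine(1)] card_X
    by (simp add: finite_subset[OF nine(2) finite_X])
  then obtain g h where gh: "X - {s1,s2,s3,a,b,c,d,e,f} = {g, h}" "g \<noteq> h"
    by (auto simp: card_2_iff)
  then have "distinct [s1,s2,s3,g,h,a,b,c,d,e,f]" "X = {s1,s2,s3,g,h,a,b,c,d,e,f}"
    using nine by auto
  then show ?thesis using K1 K2 K3 by (rule that)
qed

text \<open>A vertex outside the triangle and the wings of its blocks has all of \<open>s1, s2, s3\<close> as
  wings, so two of them lie in one of its two blocks, whose other spine vertex can only be \<open>h\<close>.\<close>

lemma triangle_gh_block:
  assumes dist: "distinct [s1,s2,s3,g,h,a,b,c,d,e,f]"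
    and X_eq: "X = {s1,s2,s3,g,h,a,b,c,d,e,f}"
    and spines: "spine s1 s2" "spine s1 s3" "spine s2 s3"
    and blocks: "is_block s1 s2 a b" "is_block s1 s3 c d" "is_block s2 s3 e f"
  obtains p q where "p \<in> {s1,s2,s3}" "q \<in> {s1,s2,s3}" "p \<noteq> q" "is_block g h p q"
proof -
  note neq = dist[simplified]
  note nbr = spine_graph.neighbour_cases
  have nbrs_s1: "\<And>y. spine s1 y \<Longrightarrow> y = s2 \<or> y = s3"
    using nbr[OF spines(1) spines(2)] neq by blast
  have nbrs_s2: "\<And>y. spine s2 y \<Longrightarrow> y = s1 \<or> y = s3"
    using nbr[OF spine_sym[OF spines(1)] spines(3)] neq by blast
  have nbrs_s3: "\<And>y. spine s3 y \<Longrightarrow> y = s1 \<or> y = s2"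
    using nbr[OF spine_sym[OF spines(2)] spine_sym[OF spines(3)]] neq by blast
  have wings_s1: "\<And>v. wing s1 v \<Longrightarrow> v \<in> {a,b,c,d}"
    using wing_in_blocks[OF _ _ blocks(1) blocks(2)] neq by blast
  have wings_s2: "\<And>v. wing s2 v \<Longrightarrow> v \<in> {a,b,e,f}"
    using wing_in_blocks[OF _ _ is_block_swap_spine[OF blocks(1)] blocks(3)] neq by blast
  have wings_s3: "\<And>v. wing s3 v \<Longrightarrow> v \<in> {c,d,e,f}"
    using wing_in_blocks[OF _ _ is_block_swap_spine[OF blocks(2)] is_block_swap_spine[OF blocks(3)]]
      neq by blast
  have gX: "g \<in> X" "s1 \<in> X" "s2 \<in> X" "s3 \<in> X" using X_eq by auto
  have wing_g_s: "wing g s1" "wing g s2" "wing g s3"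
  proof -
    show "wing g s1" by (rule wing_if_not_spine_not_wing) (use gX neq nbrs_s1 wings_s1 in auto)
    show "wing g s2" by (rule wing_if_not_spine_not_wing) (use gX neq nbrs_s2 wings_s2 in auto)
    show "wing g s3" by (rule wing_if_not_spine_not_wing) (use gX neq nbrs_s3 wings_s3 in auto)
  qed
  obtain n1 n2 where nn: "n1 \<noteq> n2" "spine g n1" "spine g n2"
    using spine_two_neighbours gX by blast
  obtain p1 q1 where bg1: "is_block g n1 p1 q1" using nn(2) by (auto simp: spine_def)
  obtain p2 q2 where bg2: "is_block g n2 p2 q2" using nn(3) by (auto simp: spine_def)
  have "s1 \<in> {p1,q1,p2,q2}" "s2 \<in> {p1,q1,p2,q2}" "s3 \<in> {p1,q1,p2,q2}"
    using wing_in_blocks[OF _ nn(1) bg1 bg2] wing_g_s by blast+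
  then obtain n p q where bn: "is_block g n p q" "p \<in> {s1,s2,s3}" "q \<in> {s1,s2,s3}" "p \<noteq> q"
    using is_block_wings_perm[OF bg1] is_block_wings_perm[OF bg2] neq by blast
  have "n = h"
  proof -
    have nX: "n \<in> X" "n \<noteq> g" "n \<noteq> p" "n \<noteq> q"
      using is_block_distinct[OF bn(1)] by auto
    have "\<not> spine n p" "wing n p" "wing n q"
      using is_block_wing_not_spine[OF is_block_swap_spine[OF bn(1)]] is_block_wing[OF bn(1)]
      by auto
    then have "n \<notin> {s1,s2,s3}" using spines spine_sym bn(2-4) nX by blast
    moreover have "wing p n \<or> wing q n" if "n \<in> {a,b,c,d,e,f}"
    proof -
      have "wing s1 a" "wing s2 a" "wing s1 b" "wing s2 b" "wing s1 c" "wing s3 c" "wing s1 d"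
        "wing s3 d" "wing s2 e" "wing s3 e" "wing s2 f" "wing s3 f"
        using is_block_wing blocks by blast+
      then show ?thesis using that bn(2-4) by auto
    qed
    then have "n \<notin> {a,b,c,d,e,f}" using \<open>wing n p\<close> \<open>wing n q\<close> wing_asym by blast
    ultimately show "n = h" using nX X_eq by auto
  qed
  with bn show ?thesis using that by blast
qed

lemma no_spine_triangle:
  assumes spines: "spine s1 s2" "spine s1 s3" "spine s2 s3"
  shows False
proof -
  obtain a b c d e f g h where dist: "distinct [s1,s2,s3,g,h,a,b,c,d,e,f]"
    and X_eq: "X = {s1,s2,s3,g,h,a,b,c,d,e,f}"
    and blocks: "is_block s1 s2 a b" "is_block s1 s3 c d" "is_block s2 s3 e f"
    by (rule spine_triangle_labelling[OF spines])
  obtain p q where pq: "p \<in> {s1,s2,s3}" "q \<in> {s1,s2,s3}" "p \<noteq> q" "is_block g h p q"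
    by (rule triangle_gh_block[OF dist X_eq spines blocks])
  note neq = dist[simplified]
  consider "is_block g h s1 s2" | "is_block g h s1 s3" | "is_block g h s2 s3"
    using pq is_block_swap_wings by blast
  then show False
  proof cases
    case 1
    show False by (rule triangle_absurd_gh_block[OF dist X_eq spines blocks 1])
  next
    case 2
    have "distinct [s1,s3,s2,g,h,c,d,a,b,f,e]" "X = {s1,s3,s2,g,h,c,d,a,b,f,e}"
      using neq X_eq by auto
    from triangle_absurd_gh_block[OF this spines(2,1) spine_sym[OF spines(3)] blocks(2,1)
        is_block_swap_wings[OF is_block_swap_spine[OF blocks(3)]] 2]
    show False .
  next
    case 3
    have "distinct [s2,s3,s1,g,h,e,f,a,b,c,d]" "X = {s2,s3,s1,g,h,e,f,a,b,c,d}"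
      using neq X_eq by auto
    from triangle_absurd_gh_block[OF this spines(3) spine_sym[OF spines(1)] spine_sym[OF spines(2)]
        blocks(3) is_block_swap_spine[OF blocks(1)] is_block_swap_spine[OF blocks(2)] 3]
    show False .
  qed
qed

lemma spine_closed_card_3_triangle:
  assumes C: "spine_closed C" and "card C = 3"
  obtains s1 s2 s3 where "spine s1 s2" "spine s1 s3" "spine s2 s3"
proof -
  have CX: "C \<subseteq> X" using C by (simp add: spine_closed_def)
  obtain s1 where s1: "s1 \<in> C" using \<open>card C = 3\<close> by fastforce
  obtain s2 s3 where s: "s2 \<noteq> s3" "spine s1 s2" "spine s1 s3"
    using spine_two_neighbours s1 CX by blast
  have "s2 \<in> C" "s3 \<in> C" using C s1 s by (auto simp: spine_closed_def)
  have "card {s1, s2, s3} = 3" using s spine_distinct by auto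
  then have C_eq: "C = {s1, s2, s3}"
    using card_subset_eq[OF spine_closed_finite[OF C]] s1 \<open>s2 \<in> C\<close> \<open>s3 \<in> C\<close> \<open>card C = 3\<close>
    by (metis empty_subsetI insert_subset)
  obtain z1 z2 where z: "z1 \<noteq> z2" "spine s2 z1" "spine s2 z2"
    using spine_two_neighbours \<open>s2 \<in> C\<close> CX by blast
  have "z1 \<in> C" "z2 \<in> C" "z1 \<noteq> s2" "z2 \<noteq> s2"
    using C \<open>s2 \<in> C\<close> z spine_distinct by (auto simp: spine_closed_def)
  then have "spine s2 s3" using z C_eq by auto
  with s show ?thesis using that by blast
qed

lemma spine_closed_eq_X:
  assumes C: "spine_closed C" and "C \<noteq> {}"
  shows "C = X"
proof (rule ccontr)
  assume "C \<noteq> X"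
  have CX: "C \<subseteq> X" using C by (simp add: spine_closed_def)
  have C': "spine_closed (X - C)" "X - C \<noteq> {}"
    using spine_closed_compl[OF C] CX \<open>C \<noteq> X\<close> by auto
  have card_compl: "card (X - C) = 11 - card C"
    using card_Diff_subset[OF spine_closed_finite[OF C] CX] card_X by simp
  have "card C \<noteq> 3" "card (X - C) \<noteq> 3"
    using spine_closed_card_3_triangle no_spine_triangle C C' by metis+
  moreover note facts = spine_closed_card[OF C \<open>C \<noteq> {}\<close>] spine_closed_card[OF C']
  ultimately have "card C = 5 \<or> card C = 6" using card_compl by auto
  with facts show False by auto
qed

lemma spine_edges_eq: "spine_edges B = {{x, y} | x y. spine x y}"
proof (intro equalityI subsetI)
  fix e assume "e \<in> spine_edges B"
  then show "e \<in> {{x, y} | x y. spine x y}"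
    unfolding spine_edges_def using block_is_block is_block_spine by blast
next
  fix e assume "e \<in> {{x, y} | x y. spine x y}"
  then obtain x y a b c d where "e = {x, y}" "(a, b, c, d) \<in> B" "{a, b} = {x, y}"
    by (auto simp: spine_def is_block_iff_block)
  then show "e \<in> spine_edges B" unfolding spine_edges_def by blast
qed

end

theorem lemma3p1:
  fixes X :: "'a set" and B :: "'a block set"
  assumes "K4e_design X B 11"
  shows "is_cycle X (spine_edges B) 11"
proof -
  interpret K4e_design_11 X B by unfold_locales (rule assms)
  have "is_cycle X {{x, y} | x y. spine x y} (card X)"
  proof (rule spine_graph.is_cycle_if_connected)
    fix C assume "C \<subseteq> X" "C \<noteq> {}" "\<forall>x\<in>C. \<forall>y. spine x y \<longrightarrow> y \<in> C"
    then show "C = X" using spine_closed_eq_X unfolding spine_closed_def by blast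
  qed (use card_X in auto)
  then show ?thesis by (simp add: spine_edges_eq card_X)
qed

end
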